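(* Assume Assumption (S) of the context holds. Then $\|M^*\|:=\sup_{\omega\in\mathbb V^k,\ \omega\not\equiv0}\frac{\|M^*\omega\|}{\|\omega\|}\le C$, where $C$ is a positive constant independent of the mesh $\{I_i\}$.
   Context: Let $\Omega=[a,b]$ be partitioned into finitely many cells $I_i=[x_{i-\frac12},x_{i+\frac12}]$ with sizes $h_i$, $h=\max_i h_i$, quasi-uniform ($h\le Ch_i$ for all $i$ with a fixed constant $C$). $\|\cdot\|$ is the $L^2(\Omega)$ norm, $(\cdot,\cdot)_{I_i}$ the $L^2(I_i)$ inner product. $\mathbb V^k=\{v\in L^2(\Omega): v|_{I_i}\in\mathbb P^k(I_i)\ \forall i\}$. Each $I_i$ has subdivision points $x_{i-\frac12}=x_{i,0}<x_{i,1}<\dots<x_{i,k}<x_{i,k+1}=x_{i+\frac12}$, control volumes $I_{i,j}=[x_{i,j},x_{i,j+1}]$, $j=0,\dots,k$, and $\mathbb V^{k,*}$ is the space of functions constant on each $I_{i,j}$. On each $I_i$ a quadrature $Q_i^k(v)=\sum_{j=0}^{k+1}A_{i,j}v(x_{i,j})$ is given with error $R_i^k(v)=\int_{I_i}v\,dx-Q_i^k(v)$, exact on $\mathbb P^{k-1}(I_i)$. $M^*:\mathbb V^k\to\mathbb V^{k,*}$ is defined cellwise: for $v=\omega|_{I_i}$, $(M^*\omega)|_{I_{i,0}}=v(x_{i-\frac12})+A_{i,0}v'(x_{i-\frac12})$ and $(M^*\omega)|_{I_{i,j}}-(M^*\omega)|_{I_{i,j-1}}=A_{i,j}v'(x_{i,j})$,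 $j=1,\dots,k$ (one-sided values from inside $I_i$). $L_{i,\ell}$ is the shifted Legendre polynomial of degree $\ell$ on $I_i$ with $L_{i,\ell}(x_{i+\frac12})=1$, $(L_{i,\ell},L_{i,m})_{I_i}=\delta_{\ell m}h_i/(2\ell+1)$. Assumption (S): $k\ge1$ and for every $i$, (1) $R_i^k(v)=0$ for all $v\in\mathbb P^{2k-1}(I_i)$, and (2) $\frac{h_i}{2k-1}-Q_i^k(L_{i,k+1}L_{i,k-1})>0$. *)

theory Defs
  imports "HOL-Analysis.Analysis" "HOL-Computational_Algebra.Polynomial"
begin

text \<open>Shifted Legendre polynomial of degree n on the reference interval [0,1],
  normalised so that its value at 1 equals 1.\<close>
definition shleg :: "nat \<Rightarrow> real \<Rightarrow> real" where
  "shleg n t = (\<Sum>j\<le>n. (-1) ^ (n + j) * real (n choose j) * real ((n + j) choose j) * t ^ j)"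

definition cell_leg :: "real \<Rightarrow> real \<Rightarrow> nat \<Rightarrow> real \<Rightarrow> real" where
  "cell_leg c h l x = shleg l ((x - c) / h)"

definition qnode :: "(nat \<Rightarrow> real) \<Rightarrow> real \<Rightarrow> real \<Rightarrow> nat \<Rightarrow> real" where
  "qnode xi c h j = c + h * xi j"

definition qweight :: "(nat \<Rightarrow> real) \<Rightarrow> real \<Rightarrow> nat \<Rightarrow> real" where
  "qweight w h j = h * w j"

definition quad :: "nat \<Rightarrow> (nat \<Rightarrow> real) \<Rightarrow> (nat \<Rightarrow> real) \<Rightarrow> real \<Rightarrow> real \<Rightarrow> (real \<Rightarrow> real) \<Rightarrow> real" where
  "quad k xi w c h v = (\<Sum>j\<le>k + 1. qweight w h j * v (qnode xi c h j))"

definition assumption_S :: "nat \<Rightarrow> (nat \<Rightarrow> real) \<Rightarrow> (nat \<Rightarrow> real) \<Rightarrow> bool" where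
  "assumption_S k xi w \<longleftrightarrow> k \<ge> 1 \<and>
     (\<forall>c h. h > 0 \<longrightarrow>
        (\<forall>v :: real poly. degree v \<le> 2 * k - 1 \<longrightarrow>
            integral {c..c + h} (poly v) - quad k xi w c h (poly v) = 0)
      \<and> h / real (2 * k - 1)
          - quad k xi w c h (\<lambda>x. cell_leg c h (k + 1) x * cell_leg c h (k - 1) x) > 0)"

text \<open>Values of M^* omega on the control volumes I_{i,0}, ..., I_{i,k} of a cell,
  where v is the polynomial omega restricted to the cell, y the nodes and A the weights.\<close>
fun mstar_val :: "real poly \<Rightarrow> (nat \<Rightarrow> real) \<Rightarrow> (nat \<Rightarrow> real) \<Rightarrow> nat \<Rightarrow> real" where
  "mstar_val v y A 0 = poly v (y 0) + A 0 * poly (pderiv v) (y 0)"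
| "mstar_val v y A (Suc j) = mstar_val v y A j + A (Suc j) * poly (pderiv v) (y (Suc j))"

text \<open>Mesh: breakpoints x_0 < x_1 < ... < x_N, cells I_i = [x_i, x_{i+1}], i < N.\<close>
definition cell_size :: "(nat \<Rightarrow> real) \<Rightarrow> nat \<Rightarrow> real" where
  "cell_size x i = x (Suc i) - x i"

definition mesh_size :: "nat \<Rightarrow> (nat \<Rightarrow> real) \<Rightarrow> real" where
  "mesh_size N x = Max (cell_size x ` {..<N})"

definition quasi_uniform :: "real \<Rightarrow> nat \<Rightarrow> (nat \<Rightarrow> real) \<Rightarrow> bool" where
  "quasi_uniform Cq N x \<longleftrightarrow> (\<forall>i<N. mesh_size N x \<le> Cq * cell_size x i)"

text \<open>L^2 norm of omega in V^k, omega given cellwise by polynomials p i on cell i.\<close>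
definition L2norm_pw :: "nat \<Rightarrow> (nat \<Rightarrow> real) \<Rightarrow> (nat \<Rightarrow> real poly) \<Rightarrow> real" where
  "L2norm_pw N x p = sqrt (\<Sum>i<N. integral {x i..x (Suc i)} (\<lambda>t. (poly (p i) t)\<^sup>2))"

text \<open>L^2 norm of M^* omega: on cell i, M^* omega is constant on I_{i,j} = [x_{i,j}, x_{i,j+1}].\<close>
definition Mstar_norm :: "nat \<Rightarrow> (nat \<Rightarrow> real) \<Rightarrow> (nat \<Rightarrow> real) \<Rightarrow> nat \<Rightarrow> (nat \<Rightarrow> real) \<Rightarrow> (nat \<Rightarrow> real poly) \<Rightarrow> real" where
  "Mstar_norm k xi w N x p = sqrt (\<Sum>i<N. \<Sum>j\<le>k.
      (mstar_val (p i) (qnode xi (x i) (cell_size x i)) (qweight w (cell_size x i)) j)\<^sup>2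
      * (qnode xi (x i) (cell_size x i) (Suc j) - qnode xi (x i) (cell_size x i) j))"

end

theory Submission
  imports Defs
begin

text \<open>An affine change of variables maps a cell of size h onto [0,1]; it multiplies both
  the squared L2 norm of a polynomial and the squared L2 norm of its image under M^*
  by h, because the quadrature weights scale like h and the derivative like 1/h.
  So it suffices to bound the ratio of these two quantities on the reference cell. There
  both are quadratic forms on the finite-dimensional space of polynomials of degree at
  most k, continuous in the coefficients, and the L2 norm is positive definite; comparing
  them on the compact unit sphere of coefficient vectors gives the constant.\<close>

definition poly_of_coeffs :: "nat \<Rightarrow> (nat \<Rightarrow> real) \<Rightarrow> real poly" where
  "poly_of_coeffs k a = (\<Sum>i\<le>k. monom (a i) i)"

lemma coeff_poly_of_coeffs: "coeff (poly_of_coeffs k a) n = (if n \<le> k then a n else 0)"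
  unfolding poly_of_coeffs_def by (simp add: coeff_sum)

lemma degree_poly_of_coeffs: "degree (poly_of_coeffs k a) \<le> k"
  by (rule degree_le) (simp add: coeff_poly_of_coeffs)

lemma linear_poly_of_coeffs:
  fixes F :: "real poly \<Rightarrow> real"
  assumes add: "\<And>p q. F (p + q) = F p + F q" and smult: "\<And>c p. F (smult c p) = c * F p"
  shows "F (poly_of_coeffs k a) = (\<Sum>i\<le>k. a i * F (monom 1 i))"
proof -
  have "F (\<Sum>i\<in>I. g i) = (\<Sum>i\<in>I. F (g i))" if "finite I" for I and g :: "nat \<Rightarrow> real poly"
    using that
  proof (induction I rule: finite_induct)
    case empty
    show ?case using smult[of 0 0] by simp
  qed (simp add: add)
  moreover have "monom (a i) i = smult (a i) (monom 1 i)" for i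
    by (simp add: smult_monom)
  ultimately show ?thesis
    unfolding poly_of_coeffs_def by (simp add: smult)
qed

lemma continuous_on_linear_poly_of_coeffs:
  fixes F :: "real poly \<Rightarrow> real"
  assumes "\<And>p q. F (p + q) = F p + F q" and "\<And>c p. F (smult c p) = c * F p"
  shows "continuous_on UNIV (\<lambda>a. F (poly_of_coeffs k a))"
  unfolding linear_poly_of_coeffs[OF assms] by (intro continuous_intros) auto

lemma poly_poly_of_coeffs: "poly (poly_of_coeffs k a) t = (\<Sum>i\<le>k. a i * t ^ i)"
  by (subst linear_poly_of_coeffs) (simp_all add: poly_monom)

definition unit_coeffs :: "nat \<Rightarrow> (nat \<Rightarrow> real) set" where
  "unit_coeffs k = Pi UNIV (\<lambda>m. if m \<le> k then {-1..1} else {0}) \<inter> {a. (\<Sum>i\<le>k. (a i)\<^sup>2) = 1}"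

lemma compact_unit_coeffs: "compact (unit_coeffs k)"
proof -
  have "compactin (product_topology (\<lambda>_. euclidean) UNIV)
          (PiE UNIV (\<lambda>m::nat. if m \<le> k then {-1..1::real} else {0}))"
    by (subst compactin_PiE) (auto simp: compactin_euclidean_iff)
  then have "compact (Pi UNIV (\<lambda>m::nat. if m \<le> k then {-1..1::real} else {0}))"
    by (simp add: euclidean_product_topology compactin_euclidean_iff PiE_UNIV_domain)
  moreover have "closed {a::nat \<Rightarrow> real. (\<Sum>i\<le>k. (a i)\<^sup>2) = 1}"
    by (intro closed_Collect_eq continuous_intros) auto
  ultimately show ?thesis
    unfolding unit_coeffs_def by (rule compact_Int_closed)
qed

lemma unit_coeffs_nonempty: "unit_coeffs k \<noteq> {}"
proof -
  have "(\<lambda>m. if m = 0 then 1 else 0) \<in> unit_coeffs k"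
    unfolding unit_coeffs_def by (auto simp: power2_eq_square if_distrib cong: if_cong)
  then show ?thesis by blast
qed

lemma poly_of_unit_coeffs_nonzero:
  assumes "a \<in> unit_coeffs k"
  shows "poly_of_coeffs k a \<noteq> 0"
proof
  assume "poly_of_coeffs k a = 0"
  then have "\<forall>i\<le>k. a i = 0"
    by (metis coeff_0 coeff_poly_of_coeffs)
  then show False
    using assms by (simp add: unit_coeffs_def)
qed

lemma poly_eq_smult_unit_coeffs:
  assumes deg: "degree q \<le> k" and nz: "q \<noteq> 0"
  obtains s a where "s > 0" "a \<in> unit_coeffs k" "q = smult s (poly_of_coeffs k a)"
proof -
  define S where "S = (\<Sum>i\<le>k. (coeff q i)\<^sup>2)"
  obtain i0 where "i0 \<le> k" "coeff q i0 \<noteq> 0"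
    using deg nz by (metis le_degree leading_coeff_0_iff order.refl)
  then have "0 < (coeff q i0)\<^sup>2" "(coeff q i0)\<^sup>2 \<le> S"
    unfolding S_def by (auto intro: member_le_sum)
  then have S: "S > 0" by linarith
  define s where "s = sqrt S"
  define a where "a i = (if i \<le> k then coeff q i / s else 0)" for i
  have s: "s > 0" "s\<^sup>2 = S"
    using S by (simp_all add: s_def)
  have norm_a: "(\<Sum>i\<le>k. (a i)\<^sup>2) = 1"
    using s S by (simp add: a_def S_def power_divide sum_divide_distrib[symmetric])
  have "a i \<in> (if i \<le> k then {-1..1} else {0})" for i
  proof (cases "i \<le> k")
    case True
    then have "(a i)\<^sup>2 \<le> 1"
      by (metis norm_a member_le_sum atMost_iff finite_atMost zero_le_power2)
    then show ?thesis
      using True by (simp add: abs_square_le_1 abs_le_iff)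
  qed (simp add: a_def)
  then have "a \<in> unit_coeffs k"
    using norm_a by (simp add: unit_coeffs_def)
  moreover have "q = smult s (poly_of_coeffs k a)"
    using s deg by (auto simp: poly_eq_iff coeff_poly_of_coeffs a_def coeff_eq_0)
  ultimately show thesis
    using s that by blast
qed

lemma homogeneous_le_positive_definite:
  fixes f g :: "real poly \<Rightarrow> real"
  assumes f_cont: "continuous_on UNIV (\<lambda>a. f (poly_of_coeffs k a))"
    and g_cont: "continuous_on UNIV (\<lambda>a. g (poly_of_coeffs k a))"
    and f_hom: "\<And>c q. f (smult c q) = c\<^sup>2 * f q"
    and g_hom: "\<And>c q. g (smult c q) = c\<^sup>2 * g q"
    and g_pos: "\<And>q. q \<noteq> 0 \<Longrightarrow> degree q \<le> k \<Longrightarrow> g q > 0"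
  shows "\<exists>B>0. \<forall>q. degree q \<le> k \<longrightarrow> f q \<le> B * g q"
proof -
  obtain M where M: "\<And>a. a \<in> unit_coeffs k \<Longrightarrow> f (poly_of_coeffs k a) \<le> M"
    using continuous_attains_sup[OF compact_unit_coeffs unit_coeffs_nonempty
        continuous_on_subset[OF f_cont]] by blast
  obtain a0 where a0: "a0 \<in> unit_coeffs k"
    and a0_min: "\<And>a. a \<in> unit_coeffs k \<Longrightarrow> g (poly_of_coeffs k a0) \<le> g (poly_of_coeffs k a)"
    using continuous_attains_inf[OF compact_unit_coeffs unit_coeffs_nonempty
        continuous_on_subset[OF g_cont]] by blast
  define m where "m = g (poly_of_coeffs k a0)"
  have m: "m > 0"
    unfolding m_def using a0 g_pos poly_of_unit_coeffs_nonzero degree_poly_of_coeffs by blast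
  define B where "B = max 1 (max M 0 / m)"
  have unit: "f (poly_of_coeffs k a) \<le> B * g (poly_of_coeffs k a)" if "a \<in> unit_coeffs k" for a
  proof -
    have "f (poly_of_coeffs k a) \<le> max M 0 / m * m"
      using M[OF that] m by simp
    also have "\<dots> \<le> B * g (poly_of_coeffs k a)"
      using a0_min[OF that] m unfolding m_def[symmetric] B_def by (intro mult_mono) auto
    finally show ?thesis .
  qed
  have "f q \<le> B * g q" if "degree q \<le> k" for q
  proof (cases "q = 0")
    case True
    then show ?thesis using f_hom[of 0 0] g_hom[of 0 0] by simp
  next
    case False
    then obtain s a where "a \<in> unit_coeffs k" and q: "q = smult s (poly_of_coeffs k a)"
      using poly_eq_smult_unit_coeffs \<open>degree q \<le> k\<close> by blast
    then show ?thesis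
      using unit[of a] unfolding q f_hom g_hom
      by (metis mult_left_mono zero_le_power2 mult.assoc mult.commute)
  qed
  moreover have "B > 0" unfolding B_def by simp
  ultimately show ?thesis by blast
qed

definition ref_mstar_sq :: "nat \<Rightarrow> (nat \<Rightarrow> real) \<Rightarrow> (nat \<Rightarrow> real) \<Rightarrow> real poly \<Rightarrow> real" where
  "ref_mstar_sq k xi w q = (\<Sum>j\<le>k. (mstar_val q xi w j)\<^sup>2 * (xi (Suc j) - xi j))"

definition ref_l2_sq :: "real poly \<Rightarrow> real" where
  "ref_l2_sq q = integral {0..1} (\<lambda>t. (poly q t)\<^sup>2)"

lemma mstar_val_add: "mstar_val (p + q) y A j = mstar_val p y A j + mstar_val q y A j"
  by (induction j) (simp_all add: pderiv_add algebra_simps)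

lemma mstar_val_smult: "mstar_val (smult c p) y A j = c * mstar_val p y A j"
  by (induction j) (simp_all add: pderiv_smult algebra_simps)

lemma ref_mstar_sq_smult: "ref_mstar_sq k xi w (smult c q) = c\<^sup>2 * ref_mstar_sq k xi w q"
  unfolding ref_mstar_sq_def mstar_val_smult
  by (simp add: sum_distrib_left power_mult_distrib algebra_simps)

lemma ref_l2_sq_smult: "ref_l2_sq (smult c q) = c\<^sup>2 * ref_l2_sq q"
  unfolding ref_l2_sq_def by (simp add: power_mult_distrib)

lemma continuous_on_ref_mstar_sq: "continuous_on UNIV (\<lambda>a. ref_mstar_sq k xi w (poly_of_coeffs n a))"
proof -
  have "continuous_on UNIV (\<lambda>a. mstar_val (poly_of_coeffs n a) xi w j)" for j
    by (rule continuous_on_linear_poly_of_coeffs) (simp_all add: mstar_val_add mstar_val_smult)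
  then show ?thesis
    unfolding ref_mstar_sq_def by (intro continuous_intros)
qed

lemma continuous_on_ref_l2_sq: "continuous_on UNIV (\<lambda>a. ref_l2_sq (poly_of_coeffs n a))"
proof -
  have square: "(poly (poly_of_coeffs n a) t)\<^sup>2 = (\<Sum>i\<le>n. \<Sum>i'\<le>n. a i * a i' * t ^ (i + i'))"
    for a t
    unfolding poly_poly_of_coeffs power2_eq_square sum_product by (simp add: power_add algebra_simps)
  have expand: "ref_l2_sq (poly_of_coeffs n a) =
      (\<Sum>i\<le>n. \<Sum>i'\<le>n. a i * a i' * integral {0..1} (\<lambda>t. t ^ (i + i')))" for a
    unfolding ref_l2_sq_def square
    by (simp add: integral_sum integrable_continuous_interval continuous_intros integrable_sum)
  show ?thesis
    unfolding expand by (intro continuous_intros) auto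
qed

lemma ref_l2_sq_pos:
  assumes "q \<noteq> 0"
  shows "ref_l2_sq q > 0"
proof -
  have "ref_l2_sq q \<ge> 0"
    unfolding ref_l2_sq_def by (intro integral_nonneg integrable_continuous_interval continuous_intros) auto
  moreover have "ref_l2_sq q \<noteq> 0"
  proof
    assume "ref_l2_sq q = 0"
    then have "integral (cbox 0 1) (\<lambda>t. (poly q t)\<^sup>2) = 0"
      by (simp add: ref_l2_sq_def)
    then have "\<forall>t\<in>cbox 0 (1::real). (poly q t)\<^sup>2 = 0"
      by (subst (asm) integral_cbox_eq_0_iff) (auto intro!: continuous_intros)
    then have "{0..1::real} \<subseteq> {t. poly q t = 0}"
      by auto
    moreover have "infinite {0..1::real}"
      by (simp add: infinite_Icc)
    ultimately show False
      using poly_roots_finite[OF assms] finite_subset by blast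
  qed
  ultimately show ?thesis by linarith
qed

lemma ref_mstar_sq_le_ref_l2_sq: "\<exists>B>0. \<forall>q. degree q \<le> k \<longrightarrow> ref_mstar_sq k xi w q \<le> B * ref_l2_sq q"
  by (rule homogeneous_le_positive_definite[OF continuous_on_ref_mstar_sq continuous_on_ref_l2_sq
        ref_mstar_sq_smult ref_l2_sq_smult ref_l2_sq_pos])

lemma mstar_val_affine:
  "mstar_val p (qnode xi c h) (qweight w h) j = mstar_val (pcompose p [:c, h:]) xi w j"
proof -
  have "poly (pderiv (pcompose p [:c, h:])) t = h * poly (pderiv p) (c + h * t)" for t
    by (simp add: pderiv_pcompose poly_pcompose pderiv_pCons algebra_simps)
  then show ?thesis
    by (induction j) (simp_all add: qnode_def qweight_def poly_pcompose algebra_simps)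
qed

lemma cell_mstar_sq_eq:
  "(\<Sum>j\<le>k. (mstar_val p (qnode xi c h) (qweight w h) j)\<^sup>2 * (qnode xi c h (Suc j) - qnode xi c h j))
    = h * ref_mstar_sq k xi w (pcompose p [:c, h:])"
  unfolding ref_mstar_sq_def mstar_val_affine
  by (simp add: sum_distrib_left qnode_def algebra_simps)

lemma cell_l2_sq_eq:
  assumes h: "h > 0"
  shows "integral {c..c + h} (\<lambda>t. (poly p t)\<^sup>2) = h * ref_l2_sq (pcompose p [:c, h:])"
proof -
  define I where "I = integral {c..c + h} (\<lambda>t. (poly p t)\<^sup>2)"
  have "((\<lambda>t. (poly p t)\<^sup>2) has_integral I) (cbox c (c + h))"
    unfolding I_def by (simp add: integrable_integral integrable_continuous_interval continuous_intros)
  from has_integral_affinity'[OF this h, of c]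
  have "((\<lambda>t. (poly p (h * t + c))\<^sup>2) has_integral I / h) (cbox 0 1)"
    using h by (simp add: divide_inverse mult.commute)
  then have "ref_l2_sq (pcompose p [:c, h:]) = I / h"
    unfolding ref_l2_sq_def by (simp add: poly_pcompose algebra_simps integral_unique)
  then show ?thesis
    using h unfolding I_def by simp
qed

lemma degree_pcompose_linear_le: "degree (pcompose p [:c, h:]) \<le> degree p"
  using degree_pcompose_le[of p "[:c, h:]"] by (simp add: le_trans)

lemma cell_mstar_sq_le:
  assumes B: "\<forall>q. degree q \<le> k \<longrightarrow> ref_mstar_sq k xi w q \<le> B * ref_l2_sq q"
    and h: "h > 0" and deg: "degree p \<le> k"
  shows "(\<Sum>j\<le>k. (mstar_val p (qnode xi c h) (qweight w h) j)\<^sup>2 * (qnode xi c h (Suc j) - qnode xi c h j))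
    \<le> B * integral {c..c + h} (\<lambda>t. (poly p t)\<^sup>2)"
proof -
  have "degree (pcompose p [:c, h:]) \<le> k"
    using deg degree_pcompose_linear_le le_trans by blast
  then show ?thesis
    unfolding cell_mstar_sq_eq cell_l2_sq_eq[OF h] using B h by simp
qed

theorem proposition3p8:
  fixes k :: nat and xi w :: "nat \<Rightarrow> real" and Cq :: real
  assumes nodes0: "xi 0 = 0" and nodes1: "xi (k + 1) = 1"
    and nodes_mono: "strict_mono_on {0..k + 1} xi"
    and S: "assumption_S k xi w"
  shows "\<exists>C > 0. \<forall>N (x :: nat \<Rightarrow> real) (p :: nat \<Rightarrow> real poly).
           N \<ge> 1 \<longrightarrow> strict_mono_on {0..N} x \<longrightarrow> quasi_uniform Cq N x
           \<longrightarrow> (\<forall>i<N. degree (p i) \<le> k)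
           \<longrightarrow> Mstar_norm k xi w N x p \<le> C * L2norm_pw N x p"
proof -
  obtain B where "B > 0" and B: "\<forall>q. degree q \<le> k \<longrightarrow> ref_mstar_sq k xi w q \<le> B * ref_l2_sq q"
    using ref_mstar_sq_le_ref_l2_sq by blast
  have "Mstar_norm k xi w N x p \<le> sqrt B * L2norm_pw N x p"
    if mono: "strict_mono_on {0..N} x" and deg: "\<forall>i<N. degree (p i) \<le> k" for N x p
  proof -
    have cell: "cell_size x i > 0" "x (Suc i) = x i + cell_size x i" if "i < N" for i
      using mono that by (simp_all add: cell_size_def strict_mono_on_def)
    have "(\<Sum>i<N. \<Sum>j\<le>k. (mstar_val (p i) (qnode xi (x i) (cell_size x i)) (qweight w (cell_size x i)) j)\<^sup>2
          * (qnode xi (x i) (cell_size x i) (Suc j) - qnode xi (x i) (cell_size x i) j))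
        \<le> B * (\<Sum>i<N. integral {x i..x (Suc i)} (\<lambda>t. (poly (p i) t)\<^sup>2))"
      unfolding sum_distrib_left using cell deg
      by (intro sum_mono) (simp add: cell_mstar_sq_le[OF B])
    then show ?thesis
      unfolding Mstar_norm_def L2norm_pw_def real_sqrt_mult[symmetric] by (rule real_sqrt_le_mono)
  qed
  then show ?thesis
    using \<open>B > 0\<close> by (intro exI[of _ "sqrt B"]) auto
qed

end
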